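(* Let $P=v_1v_2\cdots v_\ell$ be a path whose nodes carry bags $B_{v_j}$ such that, for every vertex, the set of nodes whose bags contain it is a contiguous subpath. Let $\{\mu_{B_{v_j}}\}$ be distributions on $B_{v_j}$-assignments whose marginals agree on intersections of bags. Let $v$ be an internal node of $P$ whose two neighbours $u,w$ on $P$ are also internal nodes of $P$ and satisfy $B_v\cap B_w\subseteq B_u$ (here $u$ may precede or follow $v$). Let $P'$ be the path obtained from $P$ by deleting $v$ and adding the edge $\{u,w\}$, and let $B(P')=\bigcup_{x\in V(P')}B_x$. Let $\mathcal A$ be the distribution of the output of SC-Round run on $P$ starting at $v_1$, and $\mathcal A'$ the distribution of the output of SC-Round run on $P'$ starting at $v_1$. Then $\mathcal A'$ equals the restriction (marginal) of $\mathcal A$ to $B(P')$.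
   Context: For a finite set $X$, an $X$-assignment is a map $X\to\{0,1\}$. SC-Round on a path starting at $v_1$: sample $f|_{B_{v_1}}$ from $\mu_{B_{v_1}}$; then for $j=2,3,\dots$ along the path, with previous node $v'$, let $B^+=B_{v_j}\cap B_{v'}$ and $B^-=B_{v_j}\setminus B^+$, and sample $f|_{B^-}$ with $\Pr[f|_{B^-}=g'] = \Pr_{g\sim\mu_{B_{v_j}}}[g|_{B^-}=g'\mid g|_{B^+}=f|_{B^+}]$. The output is the assignment $f$ on the union of all bags. *)

theory Defs
  imports "HOL-Probability.Probability_Mass_Function"
begin

text \<open>An X-assignment is a partial map f :: 'v \<rightharpoonup> bool with dom f = X.
  A path is a list of distinct nodes; consecutive list entries are adjacent.\<close>

text \<open>Continuation of SC-Round: prev is the previous node, f the assignment built so far.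
  For the next node x: B+ = B x \<inter> B prev, B- = B x - B+; sample g from mu x conditioned
  on g|B+ = f|B+ and extend f by g|B-.\<close>
fun sc_from :: "('n \<Rightarrow> 'v set) \<Rightarrow> ('n \<Rightarrow> ('v \<rightharpoonup> bool) pmf) \<Rightarrow> 'n \<Rightarrow> 'n list
                 \<Rightarrow> ('v \<rightharpoonup> bool) \<Rightarrow> ('v \<rightharpoonup> bool) pmf" where
  "sc_from B mu prev [] f = return_pmf f"
| "sc_from B mu prev (x # xs) f =
     bind_pmf (cond_pmf (mu x) {g. g |` (B x \<inter> B prev) = f |` (B x \<inter> B prev)})
       (\<lambda>g. sc_from B mu x xs (f ++ (g |` (B x - (B x \<inter> B prev)))))"

fun sc_round :: "('n \<Rightarrow> 'v set) \<Rightarrow> ('n \<Rightarrow> ('v \<rightharpoonup> bool) pmf) \<Rightarrow> 'n list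
                 \<Rightarrow> ('v \<rightharpoonup> bool) pmf" where
  "sc_round B mu [] = return_pmf Map.empty"
| "sc_round B mu (x # xs) = bind_pmf (mu x) (\<lambda>g. sc_from B mu x xs (g |` B x))"

end

theory Submission
  imports Defs
begin

text \<open>Both runs agree up to the predecessor a of v; afterwards the run on P samples v conditioned
  on B v \<inter> B a and then b conditioned on B b \<inter> B v, while the run on P' samples b conditioned on
  B b \<inter> B a. By contiguity B a \<inter> B b \<subseteq> B v, and every vertex of B v that survives in B(P') lies
  in B a or in B b, so on B(P') the values drawn at v are either copies of values fixed at a or
  are overwritten at b. If B v \<inter> B b \<subseteq> B a, the conditioning at b only sees values fixed at a.
  If B v \<inter> B a \<subseteq> B b, then sampling v given B v \<inter> B a and then b given B b \<inter> B v yields b given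
  B b \<inter> B a, because mu v and mu b have the same marginal on B v \<inter> B b. Everything after b only
  reads the current assignment on B b, so the two runs agree on B(P').\<close>

lemma restrict_map_eq_mono:
  assumes "S \<subseteq> T" "h |` T = g |` T"
  shows "h |` S = g |` S"
proof -
  have "h |` T |` S = g |` T |` S"
    using assms(2) by simp
  then show ?thesis
    using assms(1) by (simp add: Int_absorb1)
qed

lemma restrict_map_eq_apply:
  assumes "g |` A = f |` A" "z \<in> A"
  shows "g z = f z"
proof -
  have "(g |` A) z = (f |` A) z"
    using assms(1) by simp
  then show ?thesis
    using assms(2) by simp
qed

lemma restrict_map_dom_subset:
  assumes "dom g \<subseteq> A"
  shows "g |` A = g"
proof
  fix x
  show "(g |` A) x = g x"
  proof (cases "x \<in> A")
    case False
    then have "x \<notin> dom g"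
      using assms by blast
    then show ?thesis
      using False by (simp add: domIff)
  qed simp
qed

lemma map_add_restrict_apply: "(f ++ g |` A) z = (if z \<in> A \<inter> dom g then g z else f z)"
  by (cases "z \<in> A") (auto simp: map_add_def split: option.split)

lemma map_add_restrict_self: "f ++ f |` A = f"
  by (rule ext) (simp add: map_add_restrict_apply)

lemma restrict_map_add_cong:
  assumes "F |` R = F' |` R"
  shows "(F ++ D) |` R = (F' ++ D) |` R"
proof
  fix z
  have "z \<in> R \<Longrightarrow> F z = F' z"
    by (rule restrict_map_eq_apply[OF assms])
  then show "((F ++ D) |` R) z = ((F' ++ D) |` R) z"
    by (cases "z \<in> R") (auto simp: map_add_def split: option.split)
qed

lemma restrict_map_add_extension:
  assumes "dom g = A" "g |` (A \<inter> C) = f |` (A \<inter> C)"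
  shows "(f ++ g |` (A - A \<inter> C)) |` A = g"
proof
  fix z
  have "z \<in> A \<inter> C \<Longrightarrow> g z = f z"
    by (rule restrict_map_eq_apply[OF assms(2)])
  then show "((f ++ g |` (A - A \<inter> C)) |` A) z = g z"
    using assms(1) by (cases "z \<in> A") (auto simp: map_add_restrict_apply domIff)
qed

text \<open>On R, the values written at v are either copies of values fixed at a or overwritten at b.\<close>

lemma map_add_skip_restrict:
  assumes "dom g = Bv" "g |` (Bv \<inter> Ba) = f |` (Bv \<inter> Ba)"
    and "dom h = Bb" "h |` (Bb \<inter> Bv) = g |` (Bb \<inter> Bv)" "h |` (Bb \<inter> Ba) = f |` (Bb \<inter> Ba)"
    and "Bv \<inter> R \<subseteq> Ba \<union> Bb"
  shows "((f ++ g |` (Bv - Bv \<inter> Ba)) ++ h |` (Bb - Bb \<inter> Bv)) |` R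
       = (f ++ h |` (Bb - Bb \<inter> Ba)) |` R"
proof
  fix z
  have agree: "z \<in> Bv \<inter> Ba \<Longrightarrow> g z = f z" "z \<in> Bb \<inter> Bv \<Longrightarrow> h z = g z"
    "z \<in> Bb \<inter> Ba \<Longrightarrow> h z = f z"
    by (fact restrict_map_eq_apply[OF assms(2)] restrict_map_eq_apply[OF assms(4)]
        restrict_map_eq_apply[OF assms(5)])+
  have lhs: "((f ++ g |` (Bv - Bv \<inter> Ba)) ++ h |` (Bb - Bb \<inter> Bv)) z
      = (if z \<in> Bb - Bv then h z else if z \<in> Bv - Ba then g z else f z)"
    using assms(1,3) by (simp add: map_add_restrict_apply)
  have rhs: "(f ++ h |` (Bb - Bb \<inter> Ba)) z = (if z \<in> Bb - Ba then h z else f z)"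
    using assms(3) by (simp add: map_add_restrict_apply)
  show "(((f ++ g |` (Bv - Bv \<inter> Ba)) ++ h |` (Bb - Bb \<inter> Bv)) |` R) z
      = ((f ++ h |` (Bb - Bb \<inter> Ba)) |` R) z"
  proof (cases "z \<in> R")
    case True
    then have "z \<in> Bv \<Longrightarrow> z \<in> Ba \<or> z \<in> Bb"
      using assms(6) by blast
    then show ?thesis
      unfolding restrict_in[OF True] lhs rhs using agree
      by (cases "z \<in> Bb"; cases "z \<in> Bv"; cases "z \<in> Ba") simp_all
  qed simp
qed

lemma measure_cond_pmf:
  assumes "set_pmf q \<inter> E \<noteq> {}"
  shows "measure (cond_pmf q E) A = measure q (E \<inter> A) / measure q E"
  unfolding cond_pmf.rep_eq[OF assms]
  by (subst measure_uniform_measure)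
     (auto simp: emeasure_measure_pmf_not_zero[OF assms] measure_pmf.emeasure_finite)

lemma cond_pmf_cond_pmf:
  assumes "A \<subseteq> E" "set_pmf q \<inter> A \<noteq> {}"
  shows "cond_pmf (cond_pmf q E) A = cond_pmf q A"
proof (rule pmf_eqI)
  fix x
  have E: "set_pmf q \<inter> E \<noteq> {}"
    using assms by auto
  have A: "set_pmf (cond_pmf q E) \<inter> A \<noteq> {}"
    using assms set_cond_pmf[OF E] by blast
  show "pmf (cond_pmf (cond_pmf q E) A) x = pmf (cond_pmf q A) x"
    using assms(1) measure_measure_pmf_not_zero[OF E]
    by (auto simp: pmf_cond[OF A] pmf_cond[OF assms(2)] pmf_cond[OF E] measure_cond_pmf[OF E]
        Int_absorb1)
qed

lemma bind_map_pmf_cond_fibres: "bind_pmf (map_pmf \<phi> q) (\<lambda>t. cond_pmf q {y. \<phi> y = t}) = q"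
  by (rule bind_cond_pmf_cancel) (auto simp: vimage_def)

lemma bind_cond_map_pmf_cond_fibres:
  assumes "set_pmf q \<inter> \<phi> -` A \<noteq> {}"
  shows "bind_pmf (cond_pmf (map_pmf \<phi> q) A) (\<lambda>t. cond_pmf q {y. \<phi> y = t}) = cond_pmf q (\<phi> -` A)"
proof -
  let ?q = "cond_pmf q (\<phi> -` A)"
  have "bind_pmf (cond_pmf (map_pmf \<phi> q) A) (\<lambda>t. cond_pmf q {y. \<phi> y = t})
      = bind_pmf (map_pmf \<phi> ?q) (\<lambda>t. cond_pmf ?q {y. \<phi> y = t})"
    unfolding cond_map_pmf[OF assms]
  proof (rule bind_pmf_cong[OF refl])
    fix t assume "t \<in> set_pmf (map_pmf \<phi> ?q)"
    then obtain x where "x \<in> set_pmf q" "\<phi> x = t" "t \<in> A" using assms by auto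
    then show "cond_pmf q {y. \<phi> y = t} = cond_pmf ?q {y. \<phi> y = t}"
      by (intro cond_pmf_cond_pmf[symmetric]) auto
  qed
  also have "\<dots> = ?q"
    by (rule bind_map_pmf_cond_fibres)
  finally show ?thesis .
qed

lemma bind_cond_pmf_common_marginal:
  assumes marginal: "map_pmf \<phi> p = map_pmf \<phi> q" and ne: "set_pmf p \<inter> \<phi> -` A \<noteq> {}"
  shows "bind_pmf (cond_pmf p (\<phi> -` A)) (\<lambda>x. cond_pmf q {y. \<phi> y = \<phi> x}) = cond_pmf q (\<phi> -` A)"
proof -
  have "\<phi> ` set_pmf q \<inter> A \<noteq> {}"
    using ne arg_cong[OF marginal, of set_pmf] by auto
  then have ne_q: "set_pmf q \<inter> \<phi> -` A \<noteq> {}"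
    by auto
  have "bind_pmf (cond_pmf p (\<phi> -` A)) (\<lambda>x. cond_pmf q {y. \<phi> y = \<phi> x})
      = bind_pmf (map_pmf \<phi> (cond_pmf p (\<phi> -` A))) (\<lambda>t. cond_pmf q {y. \<phi> y = t})"
    by (simp add: bind_map_pmf)
  also have "\<dots> = bind_pmf (cond_pmf (map_pmf \<phi> q) A) (\<lambda>t. cond_pmf q {y. \<phi> y = t})"
    by (simp only: cond_map_pmf[OF ne, symmetric] marginal)
  also have "\<dots> = cond_pmf q (\<phi> -` A)"
    by (rule bind_cond_map_pmf_cond_fibres[OF ne_q])
  finally show ?thesis .
qed

lemma bind_cond_pmf_common_restriction:
  assumes "map_pmf (\<lambda>g. g |` T) p = map_pmf (\<lambda>g. g |` T) q" "S \<subseteq> T"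
    and "set_pmf p \<inter> {g. g |` S = s} \<noteq> {}"
  shows "bind_pmf (cond_pmf p {g. g |` S = s}) (\<lambda>g. cond_pmf q {h. h |` T = g |` T})
       = cond_pmf q {h. h |` S = s}"
proof -
  have "(\<lambda>g. g |` T) -` {t. t |` S = s} = {g. g |` S = s}"
    using assms(2) by (simp add: Int_absorb1)
  then show ?thesis
    using bind_cond_pmf_common_marginal[of "\<lambda>g. g |` T" p q "{t. t |` S = s}"] assms(1,3)
    by simp
qed

lemma dom_sc_from:
  "h \<in> set_pmf (sc_from B mu prev xs f) \<Longrightarrow> dom h \<subseteq> dom f \<union> (\<Union>x\<in>set xs. B x)"
proof (induction xs arbitrary: prev f)
  case (Cons x xs)
  then obtain g where "h \<in> set_pmf (sc_from B mu x xs (f ++ g |` (B x - B x \<inter> B prev)))"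
    by auto
  from Cons.IH[OF this] show ?case by auto
qed simp

lemma dom_sc_round:
  assumes "h \<in> set_pmf (sc_round B mu xs)"
  shows "dom h \<subseteq> (\<Union>x\<in>set xs. B x)"
proof (cases xs)
  case (Cons x xs')
  then obtain g where "h \<in> set_pmf (sc_from B mu x xs' (g |` B x))"
    using assms by auto
  from dom_sc_from[OF this] show ?thesis
    using Cons by auto
qed (use assms in simp)

lemma sc_from_append:
  "sc_from B mu prev (xs @ ys) f
     = bind_pmf (sc_from B mu prev xs f) (\<lambda>f'. sc_from B mu (last (prev # xs)) ys f')"
  by (induction xs arbitrary: prev f) (simp_all add: bind_return_pmf bind_assoc_pmf)

locale consistent_bags =
  fixes N :: "'n set" and B :: "'n \<Rightarrow> 'v set" and mu :: "'n \<Rightarrow> ('v \<rightharpoonup> bool) pmf"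
  assumes dom_mu: "x \<in> N \<Longrightarrow> set_pmf (mu x) \<subseteq> {g. dom g = B x}"
    and marginals_agree: "x \<in> N \<Longrightarrow> y \<in> N \<Longrightarrow>
      map_pmf (\<lambda>g. g |` (B x \<inter> B y)) (mu x) = map_pmf (\<lambda>g. g |` (B x \<inter> B y)) (mu y)"
begin

lemma sc_step_nonempty:
  assumes "prev \<in> N" "x \<in> N" "f |` B prev \<in> set_pmf (mu prev)"
  shows "set_pmf (mu x) \<inter> {g. g |` (B x \<inter> B prev) = f |` (B x \<inter> B prev)} \<noteq> {}"
proof -
  have "(f |` B prev) |` (B prev \<inter> B x)
      \<in> set_pmf (map_pmf (\<lambda>g. g |` (B prev \<inter> B x)) (mu prev))"
    using imageI[OF assms(3), of "\<lambda>g. g |` (B prev \<inter> B x)"] by simp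
  then have "(f |` B prev) |` (B prev \<inter> B x)
      \<in> set_pmf (map_pmf (\<lambda>g. g |` (B prev \<inter> B x)) (mu x))"
    by (simp only: marginals_agree[OF assms(1,2)])
  then obtain g where "g \<in> set_pmf (mu x)" "g |` (B prev \<inter> B x) = f |` (B prev \<inter> B x)"
    by (auto simp: Int_absorb1)
  then show ?thesis
    by (auto simp: Int_commute)
qed

lemma sc_step:
  assumes "prev \<in> N" "x \<in> N" "f |` B prev \<in> set_pmf (mu prev)"
    and "g \<in> set_pmf (cond_pmf (mu x) {g. g |` (B x \<inter> B prev) = f |` (B x \<inter> B prev)})"
  shows "g \<in> set_pmf (mu x)" "g |` (B x \<inter> B prev) = f |` (B x \<inter> B prev)" "dom g = B x"
    and "(f ++ g |` (B x - B x \<inter> B prev)) |` B x = g"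
proof -
  show g: "g \<in> set_pmf (mu x)" and agree: "g |` (B x \<inter> B prev) = f |` (B x \<inter> B prev)"
    using assms(4) sc_step_nonempty[OF assms(1-3)] by auto
  show dom: "dom g = B x"
    using dom_mu[OF assms(2)] g by auto
  show "(f ++ g |` (B x - B x \<inter> B prev)) |` B x = g"
    by (rule restrict_map_add_extension[OF dom agree])
qed

lemma sc_from_last_in_support:
  "prev \<in> N \<Longrightarrow> set xs \<subseteq> N \<Longrightarrow> f |` B prev \<in> set_pmf (mu prev) \<Longrightarrow>
   h \<in> set_pmf (sc_from B mu prev xs f) \<Longrightarrow> h |` B (last (prev # xs)) \<in> set_pmf (mu (last (prev # xs)))"
proof (induction xs arbitrary: prev f)
  case (Cons x xs)
  from Cons.prems(4) obtain g where
    g: "g \<in> set_pmf (cond_pmf (mu x) {g. g |` (B x \<inter> B prev) = f |` (B x \<inter> B prev)})" and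
    h: "h \<in> set_pmf (sc_from B mu x xs (f ++ g |` (B x - B x \<inter> B prev)))"
    by auto
  have "x \<in> N" using Cons.prems(2) by simp
  note step = sc_step[OF Cons.prems(1) this Cons.prems(3) g]
  have "h |` B (last (x # xs)) \<in> set_pmf (mu (last (x # xs)))"
    by (rule Cons.IH[OF _ _ _ h]) (use Cons.prems(2) step in auto)
  then show ?case by simp
qed simp

lemma sc_from_local:
  "prev \<in> N \<Longrightarrow> set xs \<subseteq> N \<Longrightarrow> f |` B prev \<in> set_pmf (mu prev) \<Longrightarrow>
   sc_from B mu prev xs f = map_pmf (\<lambda>h. f ++ h) (sc_from B mu prev xs (f |` B prev))"
proof (induction xs arbitrary: prev f)
  case Nil
  then show ?case by (simp add: map_add_restrict_self)
next
  case (Cons x xs)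
  let ?S = "B x \<inter> B prev" and ?D = "B x - B x \<inter> B prev"
  have x: "x \<in> N" and xs: "set xs \<subseteq> N"
    using Cons.prems(2) by auto
  have unfold: "sc_from B mu prev (x # xs) F
      = bind_pmf (cond_pmf (mu x) {g. g |` ?S = f |` ?S})
          (\<lambda>g. map_pmf (\<lambda>h. (F ++ g |` ?D) ++ h) (sc_from B mu x xs g))"
    if "F |` B prev = f |` B prev" for F
  proof -
    have F: "F |` ?S = f |` ?S" and inv: "F |` B prev \<in> set_pmf (mu prev)"
      using that Cons.prems(3) restrict_map_eq_mono[of ?S "B prev" F f] by auto
    show ?thesis
    proof (simp only: sc_from.simps F, rule bind_pmf_cong[OF refl])
      fix g assume "g \<in> set_pmf (cond_pmf (mu x) {g. g |` ?S = f |` ?S})"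
      then have g: "g \<in> set_pmf (cond_pmf (mu x) {g. g |` ?S = F |` ?S})"
        by (simp only: F)
      note step = sc_step[OF Cons.prems(1) x inv g]
      show "sc_from B mu x xs (F ++ g |` ?D) = map_pmf (\<lambda>h. (F ++ g |` ?D) ++ h) (sc_from B mu x xs g)"
        using Cons.IH[OF x xs] step(1,4) by simp
    qed
  qed
  have absorb: "f ++ ((f |` B prev ++ g) ++ h) = (f ++ g) ++ h" for g h
    by (simp add: map_add_restrict_self)
  have local: "sc_from B mu prev (x # xs) (f |` B prev)
      = bind_pmf (cond_pmf (mu x) {g. g |` ?S = f |` ?S})
          (\<lambda>g. map_pmf (\<lambda>h. (f |` B prev ++ g |` ?D) ++ h) (sc_from B mu x xs g))"
    by (rule unfold) simp
  show ?case
    unfolding unfold[OF refl] local map_bind_pmf pmf.map_comp o_def absorb ..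
qed

lemma sc_from_restrict_cong:
  assumes "b \<in> N" "set post \<subseteq> N" "F |` B b = h" "F' |` B b = h" "h \<in> set_pmf (mu b)"
    and "F |` R = F' |` R"
  shows "map_pmf (\<lambda>D. D |` R) (sc_from B mu b post F) = map_pmf (\<lambda>D. D |` R) (sc_from B mu b post F')"
  using sc_from_local[OF assms(1,2), of F] sc_from_local[OF assms(1,2), of F'] assms(3-6)
  by (simp add: pmf.map_comp o_def restrict_map_add_cong[OF assms(6)])

lemma sc_from_through_node:
  assumes a: "a \<in> N" and v: "v \<in> N" and b: "b \<in> N" and post: "set post \<subseteq> N"
    and inv: "f |` B a \<in> set_pmf (mu a)"
    and covered: "B v \<inter> R \<subseteq> B a \<union> B b" and running: "B a \<inter> B b \<subseteq> B v"
  shows "map_pmf (\<lambda>D. D |` R) (sc_from B mu a (v # b # post) f)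
       = bind_pmf (cond_pmf (mu v) {g. g |` (B v \<inter> B a) = f |` (B v \<inter> B a)})
           (\<lambda>g. bind_pmf (cond_pmf (mu b) {h. h |` (B b \<inter> B v) = g |` (B b \<inter> B v)})
              (\<lambda>h. map_pmf (\<lambda>D. D |` R) (sc_from B mu b post (f ++ h |` (B b - B b \<inter> B a)))))"
proof (simp only: sc_from.simps map_bind_pmf, rule bind_pmf_cong[OF refl])
  fix g assume g: "g \<in> set_pmf (cond_pmf (mu v) {g. g |` (B v \<inter> B a) = f |` (B v \<inter> B a)})"
  note step_v = sc_step[OF a v inv g]
  let ?f = "f ++ g |` (B v - B v \<inter> B a)"
  have "?f |` B v = g |` B v"
    using step_v(3,4) restrict_map_dom_subset[of g "B v"] by simp
  then have f_bv: "?f |` (B b \<inter> B v) = g |` (B b \<inter> B v)"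
    by (rule restrict_map_eq_mono[rotated]) blast
  show "bind_pmf (cond_pmf (mu b) {h. h |` (B b \<inter> B v) = ?f |` (B b \<inter> B v)})
          (\<lambda>h. map_pmf (\<lambda>D. D |` R) (sc_from B mu b post (?f ++ h |` (B b - B b \<inter> B v))))
      = bind_pmf (cond_pmf (mu b) {h. h |` (B b \<inter> B v) = g |` (B b \<inter> B v)})
          (\<lambda>h. map_pmf (\<lambda>D. D |` R) (sc_from B mu b post (f ++ h |` (B b - B b \<inter> B a))))"
  proof (simp only: f_bv, rule bind_pmf_cong[OF refl])
    fix h assume "h \<in> set_pmf (cond_pmf (mu b) {h. h |` (B b \<inter> B v) = g |` (B b \<inter> B v)})"
    then have h: "h \<in> set_pmf (cond_pmf (mu b) {h. h |` (B b \<inter> B v) = ?f |` (B b \<inter> B v)})"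
      by (simp only: f_bv)
    have "?f |` B v \<in> set_pmf (mu v)"
      using step_v(1,4) by simp
    note step_b = sc_step[OF v b this h]
    have "h |` (B b \<inter> B a) = g |` (B b \<inter> B a)"
      using restrict_map_eq_mono[of "B b \<inter> B a" "B b \<inter> B v" h g] step_b(2) f_bv running by auto
    also have "\<dots> = f |` (B b \<inter> B a)"
      using restrict_map_eq_mono[of "B b \<inter> B a" "B v \<inter> B a" g f] step_v(2) running by auto
    finally have h_ba: "h |` (B b \<inter> B a) = f |` (B b \<inter> B a)" .
    show "map_pmf (\<lambda>D. D |` R) (sc_from B mu b post (?f ++ h |` (B b - B b \<inter> B v)))
        = map_pmf (\<lambda>D. D |` R) (sc_from B mu b post (f ++ h |` (B b - B b \<inter> B a)))"
      by (rule sc_from_restrict_cong[OF b post step_b(4)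
            restrict_map_add_extension[OF step_b(3) h_ba] step_b(1)
            map_add_skip_restrict[OF step_v(3,2) step_b(3) step_b(2)[unfolded f_bv] h_ba covered]])
  qed
qed

lemma sc_from_skip_node:
  assumes a: "a \<in> N" and v: "v \<in> N" and b: "b \<in> N" and post: "set post \<subseteq> N"
    and inv: "f |` B a \<in> set_pmf (mu a)"
    and covered: "B v \<inter> R \<subseteq> B a \<union> B b" and running: "B a \<inter> B b \<subseteq> B v"
    and sep: "B v \<inter> B b \<subseteq> B a \<or> B v \<inter> B a \<subseteq> B b"
  shows "map_pmf (\<lambda>D. D |` R) (sc_from B mu a (v # b # post) f)
       = map_pmf (\<lambda>D. D |` R) (sc_from B mu a (b # post) f)"
proof -
  let ?S = "B b \<inter> B a" and ?T = "B b \<inter> B v"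
  let ?tail = "\<lambda>h. map_pmf (\<lambda>D. D |` R) (sc_from B mu b post (f ++ h |` (B b - B b \<inter> B a)))"
  have skip: "map_pmf (\<lambda>D. D |` R) (sc_from B mu a (b # post) f)
      = bind_pmf (cond_pmf (mu b) {h. h |` ?S = f |` ?S}) ?tail"
    by (simp add: map_bind_pmf)
  note through = sc_from_through_node[OF a v b post inv covered running]
  consider (before) "B v \<inter> B b \<subseteq> B a" | (after) "B v \<inter> B a \<subseteq> B b"
    using sep by blast
  then show ?thesis
  proof cases
    case before
    have "?T = ?S" using before running by blast
    have "bind_pmf (cond_pmf (mu b) {h. h |` ?T = g |` ?T}) ?tail
        = bind_pmf (cond_pmf (mu b) {h. h |` ?S = f |` ?S}) ?tail"
      if "g \<in> set_pmf (cond_pmf (mu v) {g. g |` (B v \<inter> B a) = f |` (B v \<inter> B a)})" for g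
    proof -
      have "g |` ?S = f |` ?S"
        using restrict_map_eq_mono[OF _ sc_step(2)[OF a v inv that], of ?S] running by blast
      then show ?thesis
        using \<open>?T = ?S\<close> by simp
    qed
    then have "bind_pmf (cond_pmf (mu v) {g. g |` (B v \<inter> B a) = f |` (B v \<inter> B a)})
        (\<lambda>g. bind_pmf (cond_pmf (mu b) {h. h |` ?T = g |` ?T}) ?tail)
      = bind_pmf (cond_pmf (mu v) {g. g |` (B v \<inter> B a) = f |` (B v \<inter> B a)})
        (\<lambda>_. bind_pmf (cond_pmf (mu b) {h. h |` ?S = f |` ?S}) ?tail)"
      by (rule bind_pmf_cong[OF refl])
    then show ?thesis
      unfolding through skip bind_pmf_const .
  next
    case after
    have "B v \<inter> B a = ?S" using after running by blast
    have "map_pmf (\<lambda>g. g |` ?T) (mu v) = map_pmf (\<lambda>g. g |` ?T) (mu b)"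
      using marginals_agree[OF v b] by (simp add: Int_commute)
    then have "bind_pmf (cond_pmf (mu v) {g. g |` ?S = f |` ?S}) (\<lambda>g. cond_pmf (mu b) {h. h |` ?T = g |` ?T})
        = cond_pmf (mu b) {h. h |` ?S = f |` ?S}"
      using sc_step_nonempty[OF a v inv] \<open>B v \<inter> B a = ?S\<close>
      by (intro bind_cond_pmf_common_restriction) auto
    then show ?thesis
      unfolding through skip \<open>B v \<inter> B a = ?S\<close> by (simp add: bind_assoc_pmf[symmetric])
  qed
qed

lemma sc_round_skip_node:
  assumes nodes: "set (p0 # xs @ v # b # post) \<subseteq> N"
    and covered: "B v \<inter> (\<Union>x\<in>set (p0 # xs @ b # post). B x) \<subseteq> B (last (p0 # xs)) \<union> B b"
    and running: "B (last (p0 # xs)) \<inter> B b \<subseteq> B v"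
    and sep: "B v \<inter> B b \<subseteq> B (last (p0 # xs)) \<or> B v \<inter> B (last (p0 # xs)) \<subseteq> B b"
  shows "sc_round B mu (p0 # xs @ b # post)
       = map_pmf (\<lambda>h. h |` (\<Union>x\<in>set (p0 # xs @ b # post). B x)) (sc_round B mu (p0 # xs @ v # b # post))"
    (is "_ = map_pmf (\<lambda>h. h |` ?R) _")
proof -
  let ?a = "last (p0 # xs)"
  have "map_pmf (\<lambda>h. h |` ?R) (sc_round B mu (p0 # xs @ v # b # post))
      = bind_pmf (mu p0) (\<lambda>g. bind_pmf (sc_from B mu p0 xs (g |` B p0))
          (\<lambda>f. map_pmf (\<lambda>h. h |` ?R) (sc_from B mu ?a (v # b # post) f)))"
    by (simp only: sc_round.simps sc_from_append map_bind_pmf)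
  also have "\<dots> = bind_pmf (mu p0) (\<lambda>g. bind_pmf (sc_from B mu p0 xs (g |` B p0))
          (\<lambda>f. map_pmf (\<lambda>h. h |` ?R) (sc_from B mu ?a (b # post) f)))"
  proof (intro bind_pmf_cong[OF refl])
    fix g f assume g: "g \<in> set_pmf (mu p0)" and f: "f \<in> set_pmf (sc_from B mu p0 xs (g |` B p0))"
    have "(g |` B p0) |` B p0 \<in> set_pmf (mu p0)"
      using g dom_mu[of p0] nodes by (simp add: restrict_map_dom_subset subset_iff)
    then have "f |` B ?a \<in> set_pmf (mu ?a)"
      using sc_from_last_in_support[OF _ _ _ f] nodes by auto
    then show "map_pmf (\<lambda>h. h |` ?R) (sc_from B mu ?a (v # b # post) f)
        = map_pmf (\<lambda>h. h |` ?R) (sc_from B mu ?a (b # post) f)"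
      using nodes covered running sep by (intro sc_from_skip_node) auto
  qed
  also have "\<dots> = map_pmf (\<lambda>h. h |` ?R) (sc_round B mu (p0 # xs @ b # post))"
    by (simp only: sc_round.simps sc_from_append map_bind_pmf)
  also have "\<dots> = sc_round B mu (p0 # xs @ b # post)"
    by (intro map_pmf_idI restrict_map_dom_subset dom_sc_round)
  finally show ?thesis ..
qed

end

lemma contiguous_bags_at_node:
  assumes contiguous: "\<And>a i j l. i \<le> j \<Longrightarrow> j \<le> l \<Longrightarrow> l < length P \<Longrightarrow>
      a \<in> B (P ! i) \<Longrightarrow> a \<in> B (P ! l) \<Longrightarrow> a \<in> B (P ! j)"
    and k: "0 < k" "k + 1 < length P"
  shows "B (P ! k) \<inter> (\<Union>x\<in>set (take k P @ drop (k + 1) P). B x) \<subseteq> B (P ! (k - 1)) \<union> B (P ! (k + 1))"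
    and "B (P ! (k - 1)) \<inter> B (P ! (k + 1)) \<subseteq> B (P ! k)"
proof
  fix z assume "z \<in> B (P ! k) \<inter> (\<Union>x\<in>set (take k P @ drop (k + 1) P). B x)"
  then obtain x where zk: "z \<in> B (P ! k)" and zx: "z \<in> B x"
    and x: "x \<in> set (take k P) \<or> x \<in> set (drop (k + 1) P)"
    by auto
  from x show "z \<in> B (P ! (k - 1)) \<union> B (P ! (k + 1))"
  proof
    assume "x \<in> set (take k P)"
    then obtain i where "i < k" "x = P ! i"
      by (auto simp: in_set_conv_nth)
    then show ?thesis
      using contiguous[of i "k - 1" k z] zk zx k by auto
  next
    assume "x \<in> set (drop (k + 1) P)"
    then obtain j where "j < length (drop (k + 1) P)" "x = drop (k + 1) P ! j"
      by (auto simp: in_set_conv_nth)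
    then show ?thesis
      using contiguous[of k "k + 1" "k + 1 + j" z] zk zx by auto
  qed
next
  show "B (P ! (k - 1)) \<inter> B (P ! (k + 1)) \<subseteq> B (P ! k)"
    using contiguous[of "k - 1" k "k + 1"] k by auto
qed

lemma split_list_at_node:
  assumes "0 < k" "k + 1 < length P"
  obtains p0 xs where "P = p0 # xs @ P ! k # P ! (k + 1) # drop (k + 2) P"
    and "take k P @ drop (k + 1) P = p0 # xs @ P ! (k + 1) # drop (k + 2) P"
    and "last (p0 # xs) = P ! (k - 1)"
proof -
  obtain p0 xs where take: "take k P = p0 # xs"
    using assms by (cases "take k P") auto
  have "take k P = take (k - 1) P @ [P ! (k - 1)]"
    using assms take_Suc_conv_app_nth[of "k - 1" P] by simp
  then have last: "last (take k P) = P ! (k - 1)"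
    by simp
  have drop: "drop (k + 1) P = P ! (k + 1) # drop (k + 2) P"
    using assms by (simp add: Cons_nth_drop_Suc)
  have "drop k P = P ! k # drop (k + 1) P"
    using assms by (simp add: Cons_nth_drop_Suc)
  show thesis
  proof (rule that)
    show "P = p0 # xs @ P ! k # P ! (k + 1) # drop (k + 2) P"
      using append_take_drop_id[of k P] unfolding take \<open>drop k P = _\<close> drop by simp
    show "take k P @ drop (k + 1) P = p0 # xs @ P ! (k + 1) # drop (k + 2) P"
      unfolding take drop by simp
    show "last (p0 # xs) = P ! (k - 1)"
      using last take by simp
  qed
qed


theorem lemma3p7:
  fixes P :: "'n list" and B :: "'n \<Rightarrow> 'v set" and mu :: "'n \<Rightarrow> ('v \<rightharpoonup> bool) pmf"
    and k :: nat and u w :: 'n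
  assumes distinct: "distinct P"
    and finite_bags: "\<And>x. x \<in> set P \<Longrightarrow> finite (B x)"
    and contiguous: "\<And>a i j l. i \<le> j \<Longrightarrow> j \<le> l \<Longrightarrow> l < length P \<Longrightarrow>
                        a \<in> B (P ! i) \<Longrightarrow> a \<in> B (P ! l) \<Longrightarrow> a \<in> B (P ! j)"
    and mu_supp: "\<And>x. x \<in> set P \<Longrightarrow> set_pmf (mu x) \<subseteq> {f. dom f = B x}"
    and consistent: "\<And>x y. x \<in> set P \<Longrightarrow> y \<in> set P \<Longrightarrow>
        map_pmf (\<lambda>g. g |` (B x \<inter> B y)) (mu x) = map_pmf (\<lambda>g. g |` (B x \<inter> B y)) (mu y)"
    and k_internal: "2 \<le> k" "k + 3 \<le> length P"
    and neighbours: "(u = P ! (k - 1) \<and> w = P ! (k + 1)) \<or> (u = P ! (k + 1) \<and> w = P ! (k - 1))"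
    and sep: "B (P ! k) \<inter> B w \<subseteq> B u"
  shows "sc_round B mu (take k P @ drop (k + 1) P) =
         map_pmf (\<lambda>f. f |` (\<Union>x\<in>set (take k P @ drop (k + 1) P). B x)) (sc_round B mu P)"
proof -
  interpret consistent_bags "set P" B mu
    by unfold_locales (fact mu_supp consistent)+
  have k: "0 < k" "k + 1 < length P"
    using k_internal by auto
  obtain p0 xs where P: "P = p0 # xs @ P ! k # P ! (k + 1) # drop (k + 2) P"
    and P': "take k P @ drop (k + 1) P = p0 # xs @ P ! (k + 1) # drop (k + 2) P"
    and last: "last (p0 # xs) = P ! (k - 1)"
    by (rule split_list_at_node[OF k])
  note bags = contiguous_bags_at_node[of P B k, OF contiguous k]
  have "B (P ! k) \<inter> B (P ! (k + 1)) \<subseteq> B (P ! (k - 1)) \<or> B (P ! k) \<inter> B (P ! (k - 1)) \<subseteq> B (P ! (k + 1))"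
    using neighbours sep by auto
  then have "sc_round B mu (p0 # xs @ P ! (k + 1) # drop (k + 2) P)
      = map_pmf (\<lambda>f. f |` (\<Union>x\<in>set (p0 # xs @ P ! (k + 1) # drop (k + 2) P). B x))
          (sc_round B mu (p0 # xs @ P ! k # P ! (k + 1) # drop (k + 2) P))"
    by (intro sc_round_skip_node) (simp_all only: P[symmetric] P'[symmetric] last bags subset_refl)
  then show ?thesis
    unfolding P[symmetric] P'[symmetric] .
qed

end
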